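(* Let $\mathbb{K}$ be a field of characteristic zero, let $a_1,\dots,a_k\in\mathbb{K}$, and let $(\alpha_j,\beta_j)$, $1\le j\le k$, be pairs of nonnegative integers with $\alpha_1\le\dots\le\alpha_k$. Suppose $1\le\ell<k$ is the smallest index such that $\alpha_{\ell+1}>\alpha_1+\binom{\ell}{2}$, and let \[Q=\sum_{j=1}^\ell a_jX^{\alpha_j}Y^{\beta_j},\qquad R=\sum_{j=\ell+1}^k a_jX^{\alpha_j}Y^{\beta_j},\qquad P=Q+R.\] Then for every $F=uX+vY+w$ with $u,v,w\in\mathbb{K}$ and $uvw\neq0$, \[\operatorname{mult}_F(P)=\min\bigl(\operatorname{mult}_F(Q),\operatorname{mult}_F(R)\bigr).\]
   Context: $\operatorname{mult}_F(P)$ denotes the largest integer $\mu$ such that $F^\mu$ divides $P$, with the convention $\operatorname{mult}_F(0)=+\infty$. *)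

theory Defs
  imports "HOL-Computational_Algebra.Polynomial" "HOL-Library.Extended_Nat"
begin

text \<open>Bivariate polynomials K[X,Y] are represented as K[X][Y], i.e. as
  type 'a poly poly: the outer variable is Y, the inner (coefficient) variable is X.\<close>

definition varX :: "'a::comm_ring_1 poly poly" where
  "varX = [: [:0, 1:] :]"

definition varY :: "'a::comm_ring_1 poly poly" where
  "varY = [: 0, 1 :]"

definition bimonom :: "'a::comm_ring_1 \<Rightarrow> nat \<Rightarrow> nat \<Rightarrow> 'a poly poly" where
  "bimonom a i j = monom (monom a i) j"

definition mult_F :: "'a::comm_ring_1 poly poly \<Rightarrow> 'a poly poly \<Rightarrow> enat" where
  "mult_F F P = (if P = 0 then \<infinity> else enat (GREATEST mu. F ^ mu dvd P))"

end

theory Submission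
  imports Defs "Jordan_Normal_Form.Determinant"
begin

text \<open>
  Substituting \<open>Y := (T - uX - w)/v\<close> turns \<open>F = uX + vY + w\<close> into the new
  variable \<open>T\<close>, so \<open>mult_F(P)\<close> is the index of the first non-vanishing coefficient (in \<open>T\<close>)
  of the transformed polynomial.  The \<open>m\<close>-th coefficient of a monomial \<open>a X^\<alpha> Y^\<beta>\<close> is a
  multiple of \<open>X^\<alpha> (X - r)^(\<beta>-m)\<close> with \<open>r = -w/u \<noteq> 0\<close>.  The heart of the proof is a
  Wronskian estimate: a non-zero combination of the polynomials \<open>X^(a j) (X - r)^(b j)\<close>,
  \<open>j \<in> S\<close>, vanishes at \<open>0\<close> to order at most \<open>a j + (card {k \<in> S. j \<le> k} choose 2)\<close> for
  some \<open>j \<in> S\<close>.  By the choice of \<open>l\<close> this bounds the order at \<open>0\<close> of every non-zero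
  coefficient of \<open>Q\<close> by \<open>\<alpha>\<^sub>1 + (l choose 2) < \<alpha>\<^sub>l\<^sub>+\<^sub>1\<close>, whereas every coefficient of \<open>R\<close>
  is divisible by \<open>X^\<alpha>\<^sub>l\<^sub>+\<^sub>1\<close>.  Hence a coefficient of \<open>Q + R\<close> vanishes only if the
  corresponding coefficients of \<open>Q\<close> and \<open>R\<close> both vanish, and the multiplicities combine by
  \<open>min\<close>.
\<close>

section \<open>Wronskians of univariate polynomials\<close>

definition wronskian_mat :: "nat \<Rightarrow> (nat \<Rightarrow> 'a::field_char_0 poly) \<Rightarrow> 'a poly mat" where
  "wronskian_mat d u = mat d d (\<lambda>(j,i). (pderiv ^^ i) (u j))"

definition wronskian :: "nat \<Rightarrow> (nat \<Rightarrow> 'a::field_char_0 poly) \<Rightarrow> 'a poly" where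
  "wronskian d u = det (wronskian_mat d u)"

lemma wronskian_expansion:
  "wronskian d u =
     (\<Sum>p\<in>{p. p permutes {0..<d}}. signof p * (\<Prod>j=0..<d. (pderiv ^^ (p j)) (u j)))"
  unfolding wronskian_def
  apply (subst det_def'[of _ d])
   apply (simp add: wronskian_mat_def)
  apply (rule sum.cong, simp)
  apply (rule arg_cong[where f="\<lambda>x. _ * x"])
  apply (rule prod.cong, simp)
  apply (simp add: wronskian_mat_def)
  done

lemma const_poly_sum: "[:sum f S:] = (\<Sum>x\<in>S. [:f x:])"
proof (induction S rule: infinite_finite_induct)
  case (insert x F)
  then show ?case by (simp add: insert(3)[symmetric])
qed auto

lemma const_poly_mult: "[:a * b:] = [:a:] * [:(b::'a::comm_ring_1):]"
  by simp

lemma const_poly_prod: "[:prod f S:] = (\<Prod>x\<in>S. [:(f x::'a::comm_ring_1):])"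
proof (induction S rule: infinite_finite_induct)
  case (insert x F)
  then show ?case by (simp add: insert(3)[symmetric])
qed auto

lemma det_const_poly_mat:
  "det (mat d d (\<lambda>(j,k). [:A j k:])) = [:det (mat d d (\<lambda>(j,k). (A j k::'a::field_char_0))):]"
  apply (subst det_def'[of _ d], simp)
  apply (subst det_def'[of _ d], simp)
  apply (simp only: const_poly_sum const_poly_prod const_poly_mult)
  apply (rule sum.cong, simp)
  apply (rule arg_cong2[where f="(*)"])
   apply (simp add: of_int_poly)
  apply (rule prod.cong, simp)
  by (metis atLeastLessThan_iff index_mat(1) mem_Collect_eq permutes_in_image split_conv)

lemma wronskian_mat_linear_change:
  assumes "\<And>j. j < d \<Longrightarrow> h j = (\<Sum>k<d. Polynomial.smult (A j k) (u k))"
  shows "wronskian_mat d h = mat d d (\<lambda>(j,k). [:A j k:]) * wronskian_mat d u"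
  apply (rule eq_matI)
     apply (simp_all add: wronskian_mat_def assms scalar_prod_def higher_pderiv_sum higher_pderiv_smult)
  apply (rule sum.reindex_bij_witness[where i=id and j=id])
  by auto

lemma wronskian_linear_change:
  assumes "\<And>j. j < d \<Longrightarrow> h j = (\<Sum>k<d. Polynomial.smult (A j k) (u k))"
  shows "wronskian d h = [:det (mat d d (\<lambda>(j,k). A j k)):] * wronskian d u"
proof -
  have "wronskian_mat d h = mat d d (\<lambda>(j,k). [:A j k:]) * wronskian_mat d u"
    by (rule wronskian_mat_linear_change[OF assms])
  then show ?thesis unfolding wronskian_def \<open>wronskian_mat d h = _\<close>
    by (subst det_mult[of _ d]) (auto simp: wronskian_mat_def det_const_poly_mat)
qed

text \<open>The ring identity behind the product rule for \<open>(X - p)^(k+1) * s\<close>.\<close>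
lemma pderiv_root_power_identity:
  "(q::'a::comm_ring_1 poly) ^ Suc k * a + s * (Polynomial.smult c (q ^ k) * b) =
   q ^ k * (q * a + Polynomial.smult c (s * b))"
  by (simp add: algebra_simps)

lemma root_power_dvd_pderiv:
  fixes f :: "'a::field_char_0 poly"
  assumes "[:-p,1:] ^ m dvd f"
  shows "[:-p,1:] ^ (m - 1) dvd pderiv f"
proof (cases m)
  case (Suc k)
  from assms obtain s where s: "f = [:-p,1:] ^ m * s" by (auto elim: dvdE)
  have "pderiv f = [:-p,1:] ^ m * pderiv s +
          s * (Polynomial.smult (of_nat (Suc k)) ([:-p,1:] ^ k) * pderiv [:-p,1:])"
    unfolding s pderiv_mult Suc pderiv_power_Suc by simp
  also have "\<dots> = [:-p,1:] ^ k *
      ([:-p,1:] * pderiv s + Polynomial.smult (of_nat (Suc k)) (s * pderiv [:-p,1:]))"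
    unfolding Suc by (rule pderiv_root_power_identity)
  finally show ?thesis using Suc by (metis diff_Suc_1 dvd_triv_left)
qed simp

lemma root_power_dvd_higher_pderiv:
  fixes f :: "'a::field_char_0 poly"
  assumes "[:-p,1:] ^ m dvd f"
  shows "[:-p,1:] ^ (m - i) dvd (pderiv ^^ i) f"
proof (induction i)
  case 0
  then show ?case using assms by (simp only: funpow_0 diff_zero)
next
  case (Suc i)
  have "[:-p,1:] ^ (m - i - 1) dvd pderiv ((pderiv ^^ i) f)"
    by (rule root_power_dvd_pderiv[OF Suc])
  moreover have "m - Suc i = m - i - 1" by simp
  ultimately show ?case by (metis funpow.simps(2) o_apply)
qed

lemma higher_pderiv_eq_0_if_degree_less:
  fixes f :: "'a::field_char_0 poly"
  assumes "degree f < i"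
  shows "(pderiv ^^ i) f = 0"
  by (rule poly_eqI) (use assms in \<open>auto simp: coeff_higher_pderiv coeff_eq_0\<close>)

lemma sum_permutes_eq: "p permutes {0..<d} \<Longrightarrow> (\<Sum>j=0..<d. p j) = (\<Sum>j=0..<d. j)"
  using sum.permute[of p "{0..<d}" id] by simp

lemma sum_diff_le_sum_of_diffs: "(\<Sum>j\<in>S. (a j::nat)) - (\<Sum>j\<in>S. b j) \<le> (\<Sum>j\<in>S. a j - b j)"
proof -
  have "(\<Sum>j\<in>S. a j) \<le> (\<Sum>j\<in>S. (a j - b j) + b j)" by (rule sum_mono) simp
  also have "\<dots> = (\<Sum>j\<in>S. a j - b j) + (\<Sum>j\<in>S. b j)" by (simp add: sum.distrib)
  finally show ?thesis by simp
qed

text \<open>If \<open>(X - p)^(m j)\<close> divides \<open>h j\<close>, then the Wronskian is divisible by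
  \<open>(X - p)^(\<Sum> m j - \<Sum> j)\<close>: the \<open>j\<close>-th factor of each Leibniz term loses at most
  \<open>p j\<close> roots, and the \<open>p j\<close> sum up to \<open>0 + 1 + \<dots> + (d-1)\<close>.\<close>
lemma wronskian_root_power_dvd:
  fixes h :: "nat \<Rightarrow> 'a::field_char_0 poly"
  assumes "\<And>j. j < d \<Longrightarrow> [:-p,1:] ^ (m j) dvd h j"
  shows "[:-p,1:] ^ ((\<Sum>j=0..<d. m j) - (\<Sum>j=0..<d. j)) dvd wronskian d h"
  unfolding wronskian_expansion
proof (rule dvd_sum, rule dvd_mult)
  fix q assume "q \<in> {q. q permutes {0..<d}}"
  then have q: "q permutes {0..<d}" by simp
  have "[:-p,1:] ^ (\<Sum>j=0..<d. m j - q j) = (\<Prod>j=0..<d. [:-p,1:] ^ (m j - q j))"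
    by (rule power_sum)
  also have "\<dots> dvd (\<Prod>j=0..<d. (pderiv ^^ q j) (h j))"
    by (rule prod_dvd_prod, rule root_power_dvd_higher_pderiv, rule assms) simp
  finally have term_dvd: "[:-p,1:] ^ (\<Sum>j=0..<d. m j - q j) dvd (\<Prod>j=0..<d. (pderiv ^^ q j) (h j))" .
  have "(\<Sum>j=0..<d. m j) - (\<Sum>j=0..<d. j) = (\<Sum>j=0..<d. m j) - (\<Sum>j=0..<d. q j)"
    using sum_permutes_eq[OF q] by simp
  also have "\<dots> \<le> (\<Sum>j=0..<d. m j - q j)" by (rule sum_diff_le_sum_of_diffs)
  finally show "[:-p,1:] ^ ((\<Sum>j=0..<d. m j) - (\<Sum>j=0..<d. j)) dvd (\<Prod>j=0..<d. (pderiv ^^ q j) (h j))"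
    using term_dvd le_imp_power_dvd dvd_trans by blast
qed

text \<open>Each Leibniz term has degree at most \<open>\<Sum> degree (u j) - \<Sum> j\<close>.\<close>
lemma wronskian_degree_bound:
  fixes u :: "nat \<Rightarrow> 'a::field_char_0 poly"
  assumes nz: "wronskian d u \<noteq> 0"
  shows "degree (wronskian d u) + (\<Sum>j=0..<d. j) \<le> (\<Sum>j=0..<d. degree (u j))"
proof -
  let ?S = "\<Sum>j=0..<d. degree (u j)" and ?C = "\<Sum>j=0..<d. j"
  define t where "t q = (signof q :: 'a poly) * (\<Prod>j=0..<d. (pderiv ^^ q j) (u j))" for q
  have term_bound: "t q = 0 \<or> (?C \<le> ?S \<and> degree (t q) \<le> ?S - ?C)" if q: "q permutes {0..<d}" for q
  proof (cases "t q = 0")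
    case False
    then have nzp: "(\<Prod>j=0..<d. (pderiv ^^ q j) (u j)) \<noteq> 0" unfolding t_def by auto
    have le: "q j \<le> degree (u j)" if "j < d" for j
    proof (rule ccontr)
      assume "\<not> q j \<le> degree (u j)"
      then have "(pderiv ^^ q j) (u j) = 0" by (intro higher_pderiv_eq_0_if_degree_less) simp
      with nzp that show False by (simp add: prod_zero_iff)
    qed
    have "?S = (\<Sum>j=0..<d. (degree (u j) - q j) + q j)" by (rule sum.cong) (use le in auto)
    also have "\<dots> = (\<Sum>j=0..<d. degree (u j) - q j) + ?C"
      by (simp add: sum.distrib sum_permutes_eq[OF q])
    finally have S: "?S = (\<Sum>j=0..<d. degree (u j) - q j) + ?C" .
    have "degree (t q) \<le> degree (\<Prod>j=0..<d. (pderiv ^^ q j) (u j))"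
      unfolding t_def using degree_mult_le[of "signof q :: 'a poly"] by (simp add: of_int_poly)
    also have "\<dots> \<le> (\<Sum>j=0..<d. degree ((pderiv ^^ q j) (u j)))"
      using degree_prod_sum_le[of "{0..<d}"] by (simp add: o_def)
    also have "\<dots> = (\<Sum>j=0..<d. degree (u j) - q j)" by (simp add: degree_higher_pderiv)
    finally show ?thesis using S by simp
  qed simp
  have W: "wronskian d u = (\<Sum>q\<in>{q. q permutes {0..<d}}. t q)"
    unfolding wronskian_expansion t_def ..
  obtain q where q: "q permutes {0..<d}" "t q \<noteq> 0"
    using nz unfolding W by (metis (mono_tags, lifting) mem_Collect_eq sum.neutral)
  with term_bound have CS: "?C \<le> ?S" by blast
  have "degree (wronskian d u) \<le> ?S - ?C" unfolding W
    by (rule degree_sum_le[OF finite_permutations[OF finite_atLeastLessThan]])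
       (use term_bound in fastforce)
  with CS show ?thesis by simp
qed

section \<open>Non-vanishing of Wronskians\<close>

text \<open>The falling factorial \<open>D (D-1) \<dots> (D-i+1)\<close> and the corresponding polynomial in \<open>D\<close>;
  \<open>i\<close>-fold differentiation multiplies the leading coefficient by \<open>falling_fact (degree p) i\<close>.\<close>
definition falling_fact :: "nat \<Rightarrow> nat \<Rightarrow> 'a::field_char_0" where
  "falling_fact D i = (\<Prod>k<i. (of_nat D - of_nat k))"

definition falling_fact_poly :: "nat \<Rightarrow> 'a::field_char_0 poly" where
  "falling_fact_poly i = (\<Prod>k<i. [:- of_nat k, 1:])"

lemma degree_falling_fact_poly: "degree (falling_fact_poly i :: 'a::field_char_0 poly) = i"
  unfolding falling_fact_poly_def by (subst degree_prod_eq_sum_degree) auto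

lemma coeff_falling_fact_poly_top: "coeff (falling_fact_poly i :: 'a::field_char_0 poly) i = 1"
proof -
  have "lead_coeff (falling_fact_poly i :: 'a poly) = 1"
    unfolding falling_fact_poly_def by (simp add: lead_coeff_prod)
  then show ?thesis by (simp add: degree_falling_fact_poly)
qed

lemma poly_falling_fact_poly:
  "poly (falling_fact_poly i) (of_nat D) = (falling_fact D i :: 'a::field_char_0)"
  unfolding falling_fact_poly_def falling_fact_def poly_prod by simp

lemma falling_fact_eq_0: "D < i \<Longrightarrow> falling_fact D i = 0"
  unfolding falling_fact_def by (rule prod_zero) auto

lemma falling_fact_nonzero: "i \<le> D \<Longrightarrow> falling_fact D i \<noteq> (0::'a::field_char_0)"
  unfolding falling_fact_def by (auto simp: prod_zero_iff)

lemma pochhammer_eq_falling_fact: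
  "i \<le> D \<Longrightarrow> pochhammer (of_nat (Suc (D - i))) i = (falling_fact D i :: 'a::field_char_0)"
proof (induction i arbitrary: D)
  case 0
  then show ?case by (simp add: falling_fact_def)
next
  case (Suc i)
  have shift: "of_nat (Suc (D - Suc i)) + 1 = (of_nat (Suc (D - i)) :: 'a)"
    using Suc.prems by simp
  have "pochhammer (of_nat (Suc (D - Suc i)) :: 'a) (Suc i)
        = of_nat (Suc (D - Suc i)) * pochhammer (of_nat (Suc (D - Suc i)) + 1) i"
    by (rule pochhammer_rec)
  also have "\<dots> = (of_nat D - of_nat i) * falling_fact D i"
    using Suc by (simp only: shift) (simp add: of_nat_diff)
  also have "\<dots> = falling_fact D (Suc i)" by (simp add: falling_fact_def mult.commute)
  finally show ?case .
qed

lemma coeff_higher_pderiv_top: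
  fixes p :: "'a::field_char_0 poly"
  assumes "i \<le> degree p"
  shows "coeff ((pderiv ^^ i) p) (degree p - i) = falling_fact (degree p) i * lead_coeff p"
  by (simp only: coeff_higher_pderiv pochhammer_eq_falling_fact[OF assms]) (simp add: assms)

text \<open>A non-trivial combination of polynomials of pairwise distinct degrees \<open>0, \<dots>, d-1\<close>
  is non-zero: its coefficient at the largest index with non-zero weight survives.\<close>
lemma falling_fact_poly_combination_nonzero:
  assumes "i0 < d" "v i0 \<noteq> 0"
  shows "(\<Sum>i\<in>{0..<d}. Polynomial.smult (v i) (falling_fact_poly i) :: 'a::field_char_0 poly) \<noteq> 0"
proof -
  define top where "top = Max {i. i < d \<and> v i \<noteq> 0}"
  have fin: "finite {i. i < d \<and> v i \<noteq> 0}" by simp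
  have "{i. i < d \<and> v i \<noteq> 0} \<noteq> {}" using assms by auto
  then have "top \<in> {i. i < d \<and> v i \<noteq> 0}" unfolding top_def by (rule Max_in[OF fin])
  then have top: "top < d" "v top \<noteq> 0" by auto
  have above: "v i = 0" if "top < i" "i < d" for i
  proof (rule ccontr)
    assume "v i \<noteq> 0"
    then have "i \<le> top" unfolding top_def using that(2) by (intro Max_ge[OF fin]) simp
    with that(1) show False by simp
  qed
  have "coeff (\<Sum>i\<in>{0..<d}. Polynomial.smult (v i) (falling_fact_poly i)) top =
        (\<Sum>i\<in>{0..<d}. v i * coeff (falling_fact_poly i :: 'a poly) top)"
    by (simp add: coeff_sum)
  also have "\<dots> = (\<Sum>i\<in>{top}. v i * coeff (falling_fact_poly i :: 'a poly) top)"
  proof (rule sum.mono_neutral_right)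
    show "\<forall>i\<in>{0..<d} - {top}. v i * coeff (falling_fact_poly i :: 'a poly) top = 0"
    proof
      fix i assume i: "i \<in> {0..<d} - {top}"
      show "v i * coeff (falling_fact_poly i :: 'a poly) top = 0"
      proof (cases "i < top")
        case True
        then show ?thesis by (simp add: coeff_eq_0 degree_falling_fact_poly)
      qed (use above i in auto)
    qed
  qed (use top in auto)
  also have "\<dots> = v top" by (simp add: coeff_falling_fact_poly_top)
  finally show ?thesis using top by auto
qed

text \<open>The matrix \<open>(falling_fact (D j) i)\<^sub>j\<^sub>,\<^sub>i\<close> is regular for distinct \<open>D j\<close>: a kernel vector would
  give a non-zero polynomial of degree \<open>< d\<close> vanishing at the \<open>d\<close> points \<open>D j\<close>.\<close>
lemma det_falling_fact_mat_nonzero: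
  fixes D :: "nat \<Rightarrow> nat"
  assumes inj: "inj_on D {0..<d}"
  shows "det (mat d d (\<lambda>(j,i). falling_fact (D j) i :: 'a::field_char_0)) \<noteq> 0"
proof
  let ?M = "mat d d (\<lambda>(j,i). falling_fact (D j) i :: 'a)"
  assume "det ?M = 0"
  then obtain v where v: "v \<in> carrier_vec d" "v \<noteq> 0\<^sub>v d" "?M *\<^sub>v v = 0\<^sub>v d"
    using det_0_iff_vec_prod_zero_field[of ?M d] by auto
  define P where "P = (\<Sum>i\<in>{0..<d}. Polynomial.smult (v $ i) (falling_fact_poly i) :: 'a poly)"
  have root: "poly P (of_nat (D j)) = 0" if j: "j < d" for j
  proof -
    have "(?M *\<^sub>v v) $ j = 0" using v(3) j by simp
    then show ?thesis
      using j v(1) unfolding P_def poly_sum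
      by (simp add: scalar_prod_def row_def poly_falling_fact_poly mult.commute)
  qed
  obtain i0 where i0: "i0 < d" "v $ i0 \<noteq> 0"
    using v(1,2) by (metis carrier_vecD eq_vecI index_zero_vec)
  have "P \<noteq> 0"
    unfolding P_def by (rule falling_fact_poly_combination_nonzero[where v="\<lambda>i. v $ i", OF i0])
  moreover have "P = 0"
  proof (rule poly_eqI_degree[of "(\<lambda>j. of_nat (D j)) ` {0..<d}"])
    have "inj_on (\<lambda>j. of_nat (D j) :: 'a) {0..<d}"
      using inj by (auto simp: inj_on_def)
    then have card: "card ((\<lambda>j. of_nat (D j) :: 'a) ` {0..<d}) = d" by (simp add: card_image)
    have "degree P \<le> d - 1"
      unfolding P_def
      by (rule degree_sum_le) (auto intro: order.trans[OF degree_smult_le] simp: degree_falling_fact_poly)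
    then show "card ((\<lambda>j. of_nat (D j) :: 'a) ` {0..<d}) > degree P" using card i0 by linarith
    show "card ((\<lambda>j. of_nat (D j) :: 'a) ` {0..<d}) > degree (0 :: 'a poly)" using card i0 by simp
  qed (use root in auto)
  ultimately show False by simp
qed

lemma smult_sum_right: "Polynomial.smult a (sum f S) = (\<Sum>i\<in>S. Polynomial.smult a (f i))"
  by (induction S rule: infinite_finite_induct) (auto simp: smult_add_right)

lemma coeff_leibniz_term_top:
  fixes h :: "nat \<Rightarrow> 'a::field_char_0 poly"
  assumes nz: "\<And>j. j < d \<Longrightarrow> h j \<noteq> 0" and q: "q permutes {0..<d}"
  shows "coeff (\<Prod>j=0..<d. (pderiv ^^ (q j)) (h j))
           ((\<Sum>j=0..<d. degree (h j)) - (\<Sum>j=0..<d. j)) =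
         (\<Prod>j=0..<d. falling_fact (degree (h j)) (q j) * lead_coeff (h j))"
proof (cases "\<forall>j<d. q j \<le> degree (h j)")
  case True
  define N where "N = (\<Sum>j=0..<d. degree (h j)) - (\<Sum>j=0..<d. j)"
  have top: "coeff ((pderiv ^^ (q j)) (h j)) (degree (h j) - q j) =
             falling_fact (degree (h j)) (q j) * lead_coeff (h j)" if "j < d" for j
    by (rule coeff_higher_pderiv_top) (use True that in auto)
  have deriv_nz: "(pderiv ^^ (q j)) (h j) \<noteq> 0" if "j < d" for j
    using top[OF that] falling_fact_nonzero[of "q j" "degree (h j)", where 'a='a] True nz that
    by force
  have "(\<Sum>j=0..<d. degree (h j)) = (\<Sum>j=0..<d. (degree (h j) - q j) + q j)"
    by (rule sum.cong) (use True in auto)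
  also have "\<dots> = (\<Sum>j=0..<d. degree (h j) - q j) + (\<Sum>j=0..<d. j)"
    by (simp add: sum.distrib sum_permutes_eq[OF q])
  finally have N: "N = (\<Sum>j=0..<d. degree (h j) - q j)" unfolding N_def by simp
  have "degree (\<Prod>j=0..<d. (pderiv ^^ (q j)) (h j)) = N"
    unfolding N by (subst degree_prod_eq_sum_degree) (use deriv_nz in \<open>auto simp: degree_higher_pderiv\<close>)
  then have "coeff (\<Prod>j=0..<d. (pderiv ^^ (q j)) (h j)) N =
             lead_coeff (\<Prod>j=0..<d. (pderiv ^^ (q j)) (h j))"
    by simp
  also have "\<dots> = (\<Prod>j=0..<d. lead_coeff ((pderiv ^^ (q j)) (h j)))"
    by (rule lead_coeff_prod)
  also have "\<dots> = (\<Prod>j=0..<d. falling_fact (degree (h j)) (q j) * lead_coeff (h j))"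
    by (rule prod.cong) (use top in \<open>auto simp: degree_higher_pderiv\<close>)
  finally show ?thesis unfolding N_def .
next
  case False
  then obtain j where j: "j < d" "degree (h j) < q j" by auto
  have "(pderiv ^^ (q j)) (h j) = 0" using j by (intro higher_pderiv_eq_0_if_degree_less)
  then have lhs: "(\<Prod>j=0..<d. (pderiv ^^ (q j)) (h j)) = 0" using j by (intro prod_zero) auto
  have rhs: "(\<Prod>j=0..<d. falling_fact (degree (h j)) (q j) * lead_coeff (h j)) = (0::'a)"
    using j by (intro prod_zero) (auto intro!: bexI[of _ j] simp: falling_fact_eq_0)
  show ?thesis by (simp only: lhs rhs coeff_0)
qed

text \<open>Polynomials of pairwise distinct degrees have a non-zero Wronskian: its coefficient at
  \<open>\<Sum> degree (h j) - \<Sum> j\<close> is the regular determinant above times the leading coefficients.\<close>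
lemma wronskian_nonzero_if_distinct_degrees:
  fixes h :: "nat \<Rightarrow> 'a::field_char_0 poly"
  assumes nz: "\<And>j. j < d \<Longrightarrow> h j \<noteq> 0"
    and dist: "inj_on (\<lambda>j. degree (h j)) {0..<d}"
  shows "wronskian d h \<noteq> 0"
proof -
  define N where "N = (\<Sum>j=0..<d. degree (h j)) - (\<Sum>j=0..<d. j)"
  let ?M = "mat d d (\<lambda>(j,i). falling_fact (degree (h j)) i :: 'a)"
  have detM: "det ?M \<noteq> 0" by (rule det_falling_fact_mat_nonzero[OF dist])
  have det_expansion:
    "det ?M = (\<Sum>q\<in>{q. q permutes {0..<d}}. signof q * (\<Prod>j=0..<d. falling_fact (degree (h j)) (q j)))"
    by (subst det_def'[of _ d]) (auto intro!: sum.cong prod.cong dest: permutes_in_image)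
  have "coeff (wronskian d h) N =
        (\<Sum>q\<in>{q. q permutes {0..<d}}. of_int (sign q) * coeff (\<Prod>j=0..<d. (pderiv ^^ (q j)) (h j)) N)"
    unfolding wronskian_expansion coeff_sum by (rule sum.cong) (simp_all add: of_int_poly)
  also have "\<dots> = (\<Sum>q\<in>{q. q permutes {0..<d}}. of_int (sign q) *
                   ((\<Prod>j=0..<d. falling_fact (degree (h j)) (q j)) * (\<Prod>j=0..<d. lead_coeff (h j))))"
    unfolding N_def by (rule sum.cong) (simp_all add: coeff_leibniz_term_top[OF nz] prod.distrib)
  also have "\<dots> = det ?M * (\<Prod>j=0..<d. lead_coeff (h j))"
    unfolding det_expansion sum_distrib_right by (simp add: mult.assoc)
  finally have "coeff (wronskian d h) N = det ?M * (\<Prod>j=0..<d. lead_coeff (h j))" .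
  moreover have "(\<Prod>j=0..<d. lead_coeff (h j)) \<noteq> 0" using nz by (auto simp: prod_zero_iff)
  ultimately show ?thesis using detM by auto
qed

section \<open>Linearly independent families\<close>

definition lincomb :: "nat \<Rightarrow> (nat \<Rightarrow> 'a::field_char_0) \<Rightarrow> (nat \<Rightarrow> 'a poly) \<Rightarrow> 'a poly" where
  "lincomb d c u = (\<Sum>k<d. Polynomial.smult (c k) (u k))"

definition lin_indep :: "nat \<Rightarrow> (nat \<Rightarrow> 'a::field_char_0 poly) \<Rightarrow> bool" where
  "lin_indep d u \<longleftrightarrow> (\<forall>c. lincomb d c u = 0 \<longrightarrow> (\<forall>k<d. c k = 0))"

lemma lincomb_diff:
  "lincomb d (\<lambda>k. c k - b * a k) u = lincomb d c u - Polynomial.smult b (lincomb d a u)"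
  unfolding lincomb_def smult_sum_right sum_subtractf[symmetric]
  by (rule sum.cong) (simp_all add: smult_diff_left)

lemma lincomb_Suc: "lincomb (Suc d) c u = lincomb d c u + Polynomial.smult (c d) (u d)"
  unfolding lincomb_def by simp

lemma lincomb_cong: "(\<And>k. k < d \<Longrightarrow> c k = c' k) \<Longrightarrow> lincomb d c u = lincomb d c' u"
  unfolding lincomb_def by (rule sum.cong) auto

lemma lin_indep_Suc: "lin_indep (Suc d) u \<Longrightarrow> lin_indep d u"
  unfolding lin_indep_def
proof (intro allI impI)
  fix c k
  assume indep: "\<forall>c. lincomb (Suc d) c u = 0 \<longrightarrow> (\<forall>k<Suc d. c k = 0)"
    and c: "lincomb d c u = 0" and k: "k < d"
  define c' where "c' k = (if k < d then c k else 0)" for k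
  have "lincomb d c' u = lincomb d c u" by (rule lincomb_cong) (simp add: c'_def)
  then have "lincomb (Suc d) c' u = 0" unfolding lincomb_Suc using c by (simp add: c'_def)
  then have "c' k = 0" using indep k by simp
  with k show "c k = 0" by (simp add: c'_def)
qed

lemma lin_indep_affine_nonzero: "lin_indep (Suc d) u \<Longrightarrow> u d + lincomb d c u \<noteq> 0"
proof
  assume indep: "lin_indep (Suc d) u" and zero: "u d + lincomb d c u = 0"
  have "lincomb d (\<lambda>k. if k < d then c k else 1) u = lincomb d c u" by (rule lincomb_cong) simp
  then have "lincomb (Suc d) (\<lambda>k. if k < d then c k else 1) u = 0"
    unfolding lincomb_Suc using zero by (simp add: add.commute)
  with indep have "(\<lambda>k. if k < d then c k else (1::'a)) d = 0" unfolding lin_indep_def by blast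
  then show False by simp
qed

text \<open>An element \<open>u d + lincomb d c0 u\<close> of minimal degree in the affine space \<open>u d + span\<close>
  cannot share its degree with a non-zero element \<open>h\<close> of the span: subtracting a multiple of
  \<open>h\<close> would cancel the leading term and lower the degree.\<close>
lemma min_degree_affine_combination:
  fixes u :: "nat \<Rightarrow> 'a::field_char_0 poly"
  assumes indep: "lin_indep (Suc d) u"
    and minimal: "\<And>c. degree (u d + lincomb d c0 u) \<le> degree (u d + lincomb d c u)"
    and nz: "lincomb d a u \<noteq> 0"
  shows "degree (u d + lincomb d c0 u) \<noteq> degree (lincomb d a u)"
proof
  define q where "q = u d + lincomb d c0 u"
  define h where "h = lincomb d a u"
  assume "degree (u d + lincomb d c0 u) = degree (lincomb d a u)"
  then have eq: "degree q = degree h" unfolding q_def h_def .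
  define b where "b = lead_coeff q / lead_coeff h"
  define q' where "q' = u d + lincomb d (\<lambda>k. c0 k - b * a k) u"
  have q': "q' = q - Polynomial.smult b h"
    unfolding q'_def q_def h_def lincomb_diff by simp
  have "q' \<noteq> 0" unfolding q'_def by (rule lin_indep_affine_nonzero[OF indep])
  moreover have "degree q' \<le> degree q"
    unfolding q' by (rule degree_diff_le) (use degree_smult_le eq in auto)
  moreover have "coeff q' (degree q) = 0"
    unfolding q' b_def using eq nz h_def by simp
  ultimately have "degree q' < degree q"
    by (metis leading_coeff_0_iff le_neq_implies_less)
  with minimal[of "\<lambda>k. c0 k - b * a k"] show False unfolding q_def q'_def by simp
qed

text \<open>Gaussian elimination by degree: a linearly independent family can be transformed
  (by a constant matrix \<open>A\<close>) into non-zero polynomials of pairwise distinct degrees.\<close>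
lemma distinct_degree_combinations:
  fixes u :: "nat \<Rightarrow> 'a::field_char_0 poly"
  assumes "lin_indep d u"
  shows "\<exists>A. (\<forall>j<d. lincomb d (A j) u \<noteq> 0) \<and>
             (\<forall>j<d. \<forall>j'<d. degree (lincomb d (A j) u) = degree (lincomb d (A j') u) \<longrightarrow> j = j')"
  using assms
proof (induction d)
  case (Suc d)
  from Suc.IH[OF lin_indep_Suc[OF Suc.prems]] obtain A where
    A_nz: "\<forall>j<d. lincomb d (A j) u \<noteq> 0" and
    A_dist: "\<forall>j<d. \<forall>j'<d. degree (lincomb d (A j) u) = degree (lincomb d (A j') u) \<longrightarrow> j = j'"
    by blast
  obtain c0 where minimal: "\<And>c. degree (u d + lincomb d c0 u) \<le> degree (u d + lincomb d c u)"
    using ex_has_least_nat[of "\<lambda>_. True" undefined "\<lambda>c. degree (u d + lincomb d c u)"] by blast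
  define q where "q = u d + lincomb d c0 u"
  have q_nz: "q \<noteq> 0" unfolding q_def by (rule lin_indep_affine_nonzero[OF Suc.prems])
  have q_dist: "degree q \<noteq> degree (lincomb d (A j) u)" if "j < d" for j
    unfolding q_def using A_nz that by (intro min_degree_affine_combination[OF Suc.prems minimal]) auto
  define A' where "A' j = (if j < d then (\<lambda>k. if k < d then A j k else 0)
                                     else (\<lambda>k. if k < d then c0 k else 1))" for j
  have A': "lincomb (Suc d) (A' j) u = (if j < d then lincomb d (A j) u else q)" for j
  proof (cases "j < d")
    case True
    have "lincomb d (A' j) u = lincomb d (A j) u" by (rule lincomb_cong) (simp add: A'_def True)
    then show ?thesis unfolding lincomb_Suc using True by (simp add: A'_def)
  next
    case False
    have "lincomb d (A' j) u = lincomb d c0 u" by (rule lincomb_cong) (simp add: A'_def False)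
    then show ?thesis unfolding lincomb_Suc q_def using False by (simp add: A'_def add.commute)
  qed
  show ?case
  proof (intro exI[of _ A'] conjI allI impI)
    fix j assume "j < Suc d"
    then show "lincomb (Suc d) (A' j) u \<noteq> 0" unfolding A' using A_nz q_nz by auto
  next
    fix j j' assume "j < Suc d" "j' < Suc d"
      and "degree (lincomb (Suc d) (A' j) u) = degree (lincomb (Suc d) (A' j') u)"
    then show "j = j'"
      unfolding A' using A_dist q_dist[of j] q_dist[of j']
      by (cases "j < d"; cases "j' < d") (auto split: if_splits)
  qed
qed simp

lemma wronskian_nonzero_if_lin_indep:
  fixes u :: "nat \<Rightarrow> 'a::field_char_0 poly"
  assumes "lin_indep d u"
  shows "wronskian d u \<noteq> 0"
proof -
  obtain A where A_nz: "\<forall>j<d. lincomb d (A j) u \<noteq> 0" and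
    A_dist: "\<forall>j<d. \<forall>j'<d. degree (lincomb d (A j) u) = degree (lincomb d (A j') u) \<longrightarrow> j = j'"
    using distinct_degree_combinations[OF assms] by blast
  define h where "h j = lincomb d (A j) u" for j
  have "wronskian d h \<noteq> 0"
    by (rule wronskian_nonzero_if_distinct_degrees) (use A_nz A_dist in \<open>auto simp: h_def inj_on_def\<close>)
  moreover have "wronskian d h = [:det (mat d d (\<lambda>(j,k). A j k)):] * wronskian d u"
    by (rule wronskian_linear_change) (simp add: h_def lincomb_def)
  ultimately show ?thesis by auto
qed

section \<open>Orders of vanishing of combinations of \<open>X^a (X - r)^b\<close>\<close>

lemma permutes_eq_id_if_fixes_all_but_one:
  fixes q :: "nat \<Rightarrow> nat"
  assumes q: "q permutes {0..<d}" and i0: "i0 < d"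
    and fixed: "\<And>j. j < d \<Longrightarrow> j \<noteq> i0 \<Longrightarrow> q j = j"
  shows "q = id"
proof -
  have "q i0 = i0"
  proof (rule ccontr)
    assume ne: "q i0 \<noteq> i0"
    have "q i0 < d" using permutes_in_image[OF q, of i0] i0 by simp
    then have "q (q i0) = q i0" using fixed ne by auto
    then show False using ne permutes_inj[OF q] by (simp add: inj_eq)
  qed
  then have "q j = j" for j
    using fixed permutes_not_in[OF q] by (cases "j < d") auto
  then show ?thesis by auto
qed

lemma det_row_replaced_identity:
  assumes i0: "i0 < d"
  shows "det (mat d d (\<lambda>(j,k). if j = i0 then c k else if j = k then 1 else (0::'a::field_char_0))) = c i0"
proof -
  let ?M = "mat d d (\<lambda>(j,k). if j = i0 then c k else if j = k then 1 else (0::'a))"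
  have vanish: "(\<Prod>j=0..<d. ?M $$ (j, q j)) = 0" if q: "q permutes {0..<d}" "q \<noteq> id" for q
  proof -
    obtain j where j: "j < d" "j \<noteq> i0" "q j \<noteq> j"
      using permutes_eq_id_if_fixes_all_but_one[OF q(1) i0] q(2) by blast
    have "?M $$ (j, q j) = 0" using j permutes_in_image[OF q(1), of j] by simp
    then show ?thesis using j by (intro prod_zero) auto
  qed
  have "det ?M = (\<Sum>q\<in>{q. q permutes {0..<d}}. signof q * (\<Prod>j=0..<d. ?M $$ (j, q j)))"
    by (rule det_def') simp
  also have "\<dots> = (\<Sum>q\<in>{id}. signof q * (\<Prod>j=0..<d. ?M $$ (j, q j)))"
  proof (rule sum.mono_neutral_right)
    show "\<forall>q\<in>{q. q permutes {0..<d}} - {id}. signof q * (\<Prod>j=0..<d. ?M $$ (j, q j)) = 0"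
    proof
      fix q assume "q \<in> {q. q permutes {0..<d}} - {id}"
      then have "(\<Prod>j=0..<d. ?M $$ (j, q j)) = 0" by (intro vanish) auto
      then show "signof q * (\<Prod>j=0..<d. ?M $$ (j, q j)) = 0" by (simp only: mult_zero_right)
    qed
  qed (auto simp: finite_permutations permutes_id)
  also have "\<dots> = ?M $$ (i0, i0) * (\<Prod>j\<in>{0..<d} - {i0}. ?M $$ (j, j))"
    using i0 by (simp add: prod.remove[of _ i0])
  also have "(\<Prod>j\<in>{0..<d} - {i0}. ?M $$ (j, j)) = 1" by (rule prod.neutral) auto
  finally show ?thesis using i0 by simp
qed

lemma wronskian_replace_by_lincomb:
  assumes i0: "i0 < d"
  shows "wronskian d (u(i0 := lincomb d c u)) = [:c i0:] * wronskian d u"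
proof -
  define B where "B j k = (if j = i0 then c k else if j = k then 1 else (0::'a))" for j k
  have "(u(i0 := lincomb d c u)) j = (\<Sum>k<d. Polynomial.smult (B j k) (u k))" if j: "j < d" for j
  proof (cases "j = i0")
    case True
    then show ?thesis by (simp add: B_def lincomb_def)
  next
    case False
    have "(\<Sum>k<d. Polynomial.smult (B j k) (u k)) = (\<Sum>k\<in>{j}. Polynomial.smult (B j k) (u k))"
      by (rule sum.mono_neutral_right) (use j False in \<open>auto simp: B_def\<close>)
    then show ?thesis using False by (simp add: B_def)
  qed
  then have "wronskian d (u(i0 := lincomb d c u)) = [:det (mat d d (\<lambda>(j,k). B j k)):] * wronskian d u"
    by (rule wronskian_linear_change)
  also have "det (mat d d (\<lambda>(j,k). B j k)) = c i0"
    unfolding B_def by (rule det_row_replaced_identity[OF i0])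
  finally show ?thesis .
qed

lemma order_0_plus_order_le_degree:
  fixes p :: "'a::field_char_0 poly"
  assumes p: "p \<noteq> 0" and r: "r \<noteq> 0"
  shows "order 0 p + order r p \<le> degree p"
proof -
  obtain p1 where p1: "p = [:-0,1:] ^ (order 0 p) * p1" using order_1[of 0 p] by (auto elim: dvdE)
  have p1_nz: "p1 \<noteq> 0" using p p1 by auto
  have "order r p = order r ([:-0,1:] ^ (order 0 p)) + order r p1"
    using p by (subst p1, subst order_mult) (use p p1 in auto)
  also have "order r ([:-0,1:] ^ (order 0 p)) = 0" using r by (intro order_0I) simp
  finally have order_r: "order r p = order r p1" by simp
  have "degree ([:-r,1:] ^ (order r p1)) \<le> degree p1" by (rule dvd_imp_degree_le[OF order_1 p1_nz])
  then have "order r p1 \<le> degree p1" by (simp add: degree_linear_power)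
  moreover have "degree p = order 0 p + degree p1"
    using p1_nz by (subst p1) (simp add: degree_mult_eq degree_linear_power)
  ultimately show ?thesis using order_r by simp
qed

lemma choose_two_eq_sum: "(n choose 2) = (\<Sum>i=0..<n. i)"
proof (induction n)
  case (Suc n)
  have "(Suc n choose 2) = (n choose 1) + (n choose 2)" by (simp add: numeral_2_eq_2)
  then show ?case using Suc by simp
qed simp

text \<open>Replace \<open>u i0\<close> by \<open>g\<close>: the Wronskian \<open>W\<close> changes by the
  factor \<open>c i0\<close>, so \<open>ord\<^sub>0 W \<ge> ord\<^sub>0 g + \<Sum>\<^sub>k\<^sub>\<noteq>\<^sub>i\<^sub>0 a k - \<Sum> j\<close> and \<open>ord\<^sub>r W \<ge> \<Sum> b k - \<Sum> j\<close>, while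
  \<open>ord\<^sub>0 W + ord\<^sub>r W \<le> deg W \<le> \<Sum> (a k + b k) - \<Sum> j\<close>.\<close>
lemma order_0_lincomb_bound:
  fixes a b :: "nat \<Rightarrow> nat" and r :: "'a::field_char_0" and c :: "nat \<Rightarrow> 'a"
  assumes u: "\<And>k. u k = [:0,1:] ^ (a k) * [:-r,1:] ^ (b k)"
    and r: "r \<noteq> 0" and indep: "lin_indep d u" and i0: "i0 < d" "c i0 \<noteq> 0"
  shows "order 0 (lincomb d c u) \<le> a i0 + (d choose 2)"
proof -
  define g where "g = lincomb d c u"
  define C where "C = (\<Sum>j=0..<d. j)"
  define m where "m j = (if j = i0 then order 0 g else a j)" for j
  have W_nz: "wronskian d u \<noteq> 0" by (rule wronskian_nonzero_if_lin_indep[OF indep])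
  have "[:-0,1:] ^ ((\<Sum>j=0..<d. m j) - C) dvd wronskian d (u(i0 := g))"
    unfolding C_def by (rule wronskian_root_power_dvd) (use order_1[of 0 g] in \<open>auto simp: m_def u\<close>)
  also have "wronskian d (u(i0 := g)) = [:c i0:] * wronskian d u"
    unfolding g_def by (rule wronskian_replace_by_lincomb[OF i0(1)])
  finally have "[:-0,1:] ^ ((\<Sum>j=0..<d. m j) - C) dvd [:c i0:] * wronskian d u" .
  moreover have "wronskian d u = Polynomial.smult (inverse (c i0)) ([:c i0:] * wronskian d u)"
    using i0(2) by simp
  ultimately have "[:-0,1:] ^ ((\<Sum>j=0..<d. m j) - C) dvd wronskian d u"
    by (metis dvd_smult)
  then have ord_0: "(\<Sum>j=0..<d. m j) - C \<le> order 0 (wronskian d u)"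
    using W_nz order_divides by blast
  have "[:-r,1:] ^ ((\<Sum>j=0..<d. b j) - C) dvd wronskian d u"
    unfolding C_def by (rule wronskian_root_power_dvd) (simp add: u)
  then have ord_r: "(\<Sum>j=0..<d. b j) - C \<le> order r (wronskian d u)"
    using W_nz order_divides by blast
  have deg: "degree (wronskian d u) + C \<le> (\<Sum>j=0..<d. a j) + (\<Sum>j=0..<d. b j)"
    using wronskian_degree_bound[OF W_nz]
    by (simp add: C_def u degree_mult_eq degree_linear_power sum.distrib)
  have roots: "order 0 (wronskian d u) + order r (wronskian d u) \<le> degree (wronskian d u)"
    by (rule order_0_plus_order_le_degree[OF W_nz r])
  have sum_m: "(\<Sum>j=0..<d. m j) = order 0 g + (\<Sum>j\<in>{0..<d} - {i0}. a j)"
    using i0(1) by (subst sum.remove[of _ i0]) (auto simp: m_def intro!: sum.cong)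
  have sum_a: "(\<Sum>j=0..<d. a j) = a i0 + (\<Sum>j\<in>{0..<d} - {i0}. a j)"
    using i0(1) by (subst sum.remove[of _ i0]) auto
  have "order 0 g \<le> a i0 + C"
    using ord_0 ord_r deg roots sum_m sum_a by linarith
  then show ?thesis unfolding g_def C_def choose_two_eq_sum .
qed

definition lin_indep_on :: "nat set \<Rightarrow> (nat \<Rightarrow> 'a::field_char_0 poly) \<Rightarrow> bool" where
  "lin_indep_on S f \<longleftrightarrow> (\<forall>c. (\<Sum>j\<in>S. Polynomial.smult (c j) (f j)) = 0 \<longrightarrow> (\<forall>j\<in>S. c j = 0))"

lemma lin_indep_on_subset:
  assumes "finite S" "S' \<subseteq> S" "lin_indep_on S f"
  shows "lin_indep_on S' f"
  unfolding lin_indep_on_def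
proof (intro allI impI ballI)
  fix c j assume zero: "(\<Sum>j\<in>S'. Polynomial.smult (c j) (f j)) = 0" and j: "j \<in> S'"
  define c' where "c' j = (if j \<in> S' then c j else 0)" for j
  have "(\<Sum>j\<in>S. Polynomial.smult (c' j) (f j)) = (\<Sum>j\<in>S'. Polynomial.smult (c' j) (f j))"
    by (rule sum.mono_neutral_right) (use assms in \<open>auto simp: c'_def\<close>)
  also have "\<dots> = 0" using zero by (simp add: c'_def)
  finally have "c' j = 0" using assms(2,3) j unfolding lin_indep_on_def by blast
  with j show "c j = 0" by (simp add: c'_def)
qed

lemma lin_indep_on_reindex:
  assumes phi: "bij_betw \<phi> {0..<d} S" and indep: "lin_indep_on S f"
  shows "lin_indep d (\<lambda>i. f (\<phi> i))"
  unfolding lin_indep_def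
proof (intro allI impI)
  fix c k assume zero: "lincomb d c (\<lambda>i. f (\<phi> i)) = 0" and k: "k < d"
  define c' where "c' x = c (inv_into {0..<d} \<phi> x)" for x
  have "(\<Sum>x\<in>S. Polynomial.smult (c' x) (f x)) = (\<Sum>i\<in>{0..<d}. Polynomial.smult (c' (\<phi> i)) (f (\<phi> i)))"
    by (rule sum.reindex_bij_betw[OF phi, symmetric])
  also have "\<dots> = lincomb d c (\<lambda>i. f (\<phi> i))"
    unfolding lincomb_def lessThan_atLeast0 c'_def
    by (rule sum.cong) (use phi in \<open>auto simp: bij_betw_inv_into_left\<close>)
  finally have "c' (\<phi> k) = 0"
    using zero indep k bij_betw_apply[OF phi] unfolding lin_indep_on_def by auto
  then show "c k = 0" using k phi by (simp add: c'_def bij_betw_inv_into_left)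
qed

lemma order_0_indep_sum_bound:
  fixes al b :: "nat \<Rightarrow> nat" and r :: "'a::field_char_0" and e :: "nat \<Rightarrow> 'a"
  assumes r: "r \<noteq> 0" and fin: "finite S"
    and indep: "lin_indep_on S (\<lambda>j. [:0,1:] ^ (al j) * [:-r,1:] ^ (b j))"
    and j: "j \<in> S" "e j \<noteq> 0"
  shows "order 0 (\<Sum>k\<in>S. Polynomial.smult (e k) ([:0,1:] ^ (al k) * [:-r,1:] ^ (b k)))
           \<le> al j + (card S choose 2)"
proof -
  define d where "d = card S"
  obtain \<phi> where phi: "bij_betw \<phi> {0..<d} S"
    unfolding d_def using ex_bij_betw_nat_finite[OF fin] by blast
  define i0 where "i0 = inv_into {0..<d} \<phi> j"
  have i0: "i0 < d" "\<phi> i0 = j"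
    using bij_betw_apply[OF bij_betw_inv_into[OF phi] j(1)] bij_betw_inv_into_right[OF phi j(1)]
    unfolding i0_def by auto
  have "(\<Sum>k\<in>S. Polynomial.smult (e k) ([:0,1:] ^ (al k) * [:-r,1:] ^ (b k))) =
        lincomb d (\<lambda>i. e (\<phi> i)) (\<lambda>i. [:0,1:] ^ (al (\<phi> i)) * [:-r,1:] ^ (b (\<phi> i)))"
    unfolding lincomb_def lessThan_atLeast0 by (rule sum.reindex_bij_betw[OF phi, symmetric])
  also have "order 0 \<dots> \<le> al (\<phi> i0) + (d choose 2)"
    by (rule order_0_lincomb_bound[OF refl r lin_indep_on_reindex[OF phi indep] i0(1)])
       (use i0 j in simp)
  finally show ?thesis using i0 unfolding d_def by simp
qed

lemma choose_two_mono: "n \<le> m \<Longrightarrow> n choose 2 \<le> m choose 2"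
  unfolding choose_two_eq_sum by (rule sum_mono2) auto

lemma sum_drop_dependent_index:
  assumes fin: "finite S" and dep: "\<not> lin_indep_on S f"
  shows "\<exists>m\<in>S. \<exists>e'. (\<Sum>j\<in>S. Polynomial.smult (e j) (f j)) =
                     (\<Sum>j\<in>S - {m}. Polynomial.smult (e' j) (f j))"
proof -
  obtain l m where zero: "(\<Sum>j\<in>S. Polynomial.smult (l j) (f j)) = 0" and m: "m \<in> S" "l m \<noteq> 0"
    using dep unfolding lin_indep_on_def by blast
  define e' where "e' j = e j - (e m / l m) * l j" for j
  have "(\<Sum>j\<in>S. Polynomial.smult (e' j) (f j)) =
        (\<Sum>j\<in>S. Polynomial.smult (e j) (f j)) -
        Polynomial.smult (e m / l m) (\<Sum>j\<in>S. Polynomial.smult (l j) (f j))"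
    unfolding e'_def smult_sum_right sum_subtractf[symmetric]
    by (rule sum.cong) (simp_all add: smult_diff_left)
  also have "\<dots> = (\<Sum>j\<in>S. Polynomial.smult (e j) (f j))" using zero by simp
  finally have "(\<Sum>j\<in>S. Polynomial.smult (e j) (f j)) = (\<Sum>j\<in>S - {m}. Polynomial.smult (e' j) (f j))"
    using fin m by (simp add: sum.remove[of _ m] e'_def)
  then show ?thesis using m by blast
qed

text \<open>For an independent family the estimate is applied to the indices \<open>k \<ge> j\<close>, where \<open>j\<close> is
  the smallest index with non-zero coefficient.\<close>
lemma order_0_indep_sum_tail_bound:
  fixes al b :: "nat \<Rightarrow> nat" and r :: "'a::field_char_0" and e :: "nat \<Rightarrow> 'a"
  defines "f \<equiv> \<lambda>j. [:0,1:] ^ (al j) * [:-r,1:] ^ (b j)"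
  assumes r: "r \<noteq> 0" and fin: "finite S" and indep: "lin_indep_on S f"
    and nz: "(\<Sum>j\<in>S. Polynomial.smult (e j) (f j)) \<noteq> 0"
  shows "\<exists>j\<in>S. order 0 (\<Sum>j\<in>S. Polynomial.smult (e j) (f j)) \<le> al j + (card {k\<in>S. j \<le> k} choose 2)"
proof -
  define T where "T = {k\<in>S. e k \<noteq> 0}"
  have T_fin: "finite T" using fin unfolding T_def by simp
  have "T \<noteq> {}"
  proof
    assume "T = {}"
    then have "(\<Sum>j\<in>S. Polynomial.smult (e j) (f j)) = 0" unfolding T_def by (intro sum.neutral) auto
    with nz show False by simp
  qed
  define j where "j = Min T"
  have j: "j \<in> S" "e j \<noteq> 0" using Min_in[OF T_fin \<open>T \<noteq> {}\<close>] unfolding j_def T_def by auto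
  have below_j: "e k = 0" if "k \<in> S" "k < j" for k
    using Min_le[OF T_fin, of k] that unfolding j_def T_def by force
  define S' where "S' = {k\<in>S. j \<le> k}"
  have "(\<Sum>j\<in>S. Polynomial.smult (e j) (f j)) = (\<Sum>k\<in>S'. Polynomial.smult (e k) (f k))"
    unfolding S'_def
  proof (rule sum.mono_neutral_right)
    show "\<forall>k\<in>S - {k\<in>S. j \<le> k}. Polynomial.smult (e k) (f k) = 0"
      using below_j by (auto simp: not_le)
  qed (use fin in auto)
  also have "order 0 \<dots> \<le> al j + (card S' choose 2)"
    unfolding f_def
    by (rule order_0_indep_sum_bound[OF r _ lin_indep_on_subset[OF fin _ indep[unfolded f_def]]])
       (use fin j in \<open>auto simp: S'_def\<close>)
  finally show ?thesis using j unfolding S'_def by blast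
qed

text \<open>The order estimate for an arbitrary non-zero combination of the \<open>X^(al j) (X - r)^(b j)\<close>:
  linear dependencies are removed one index at a time (induction on \<open>card S\<close>), which only
  shrinks the sets \<open>{k \<in> S. j \<le> k}\<close>.\<close>
lemma order_0_sum_bound:
  fixes al b :: "nat \<Rightarrow> nat" and r :: "'a::field_char_0" and e :: "nat \<Rightarrow> 'a"
  assumes r: "r \<noteq> 0" and fin: "finite S"
    and nz: "(\<Sum>j\<in>S. Polynomial.smult (e j) ([:0,1:] ^ (al j) * [:-r,1:] ^ (b j))) \<noteq> 0"
  shows "\<exists>j\<in>S. order 0 (\<Sum>j\<in>S. Polynomial.smult (e j) ([:0,1:] ^ (al j) * [:-r,1:] ^ (b j)))
                 \<le> al j + (card {k\<in>S. j \<le> k} choose 2)"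
  using fin nz
proof (induction "card S" arbitrary: S e rule: less_induct)
  case less
  define f where "f j = [:0,1:] ^ (al j) * [:-r,1:] ^ (b j)" for j
  define g where "g = (\<Sum>j\<in>S. Polynomial.smult (e j) (f j))"
  show ?case
  proof (cases "lin_indep_on S f")
    case False
    then obtain m e' where m: "m \<in> S" and g: "g = (\<Sum>j\<in>S - {m}. Polynomial.smult (e' j) (f j))"
      using sum_drop_dependent_index[OF less.prems(1)] unfolding g_def by blast
    have "card (S - {m}) < card S" using less.prems(1) m by (meson card_Diff1_less)
    from less.hyps[OF this, of e'] g less.prems
    obtain j where j: "j \<in> S - {m}"
      and ord: "order 0 g \<le> al j + (card {k\<in>S - {m}. j \<le> k} choose 2)"
      unfolding f_def g_def by auto
    have "card {k\<in>S - {m}. j \<le> k} \<le> card {k\<in>S. j \<le> k}"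
      by (rule card_mono) (use less.prems(1) in auto)
    then show ?thesis
      using ord j choose_two_mono unfolding g_def f_def by (meson DiffD1 le_trans add_left_mono)
  next
    case True
    then show ?thesis
      using order_0_indep_sum_tail_bound[OF r less.prems(1)] less.prems(2) unfolding f_def by blast
  qed
qed

section \<open>Multiplicity along \<open>F = uX + vY + w\<close> by a change of variables\<close>

text \<open>Solving \<open>F = T\<close> for \<open>Y\<close> gives
  \<open>Y = (T - uX - w) / v\<close>, an element of \<open>K[X][T]\<close>; composing with it is a ring isomorphism
  that sends \<open>F\<close> to \<open>T\<close>.\<close>
definition Y_of_F :: "'a::field_char_0 \<Rightarrow> 'a \<Rightarrow> 'a \<Rightarrow> 'a poly poly" where
  "Y_of_F u v w = [: [:-w/v, -u/v:], [:1/v:] :]"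

lemma linear_form_eq:
  "[:[:u:]:] * varX + [:[:v:]:] * varY + [:[:w:]:] = [:[:w,u:], [:(v::'a::field_char_0):]:]"
  unfolding varX_def varY_def by simp

lemma pcompose_linear_form_Y_of_F:
  "(v::'a::field_char_0) \<noteq> 0 \<Longrightarrow> pcompose [:[:w,u:], [:v:]:] (Y_of_F u v w) = [:0,1:]"
  unfolding Y_of_F_def by (simp add: pcompose_pCons)

lemma pcompose_Y_of_F_linear_form:
  "(v::'a::field_char_0) \<noteq> 0 \<Longrightarrow> pcompose (Y_of_F u v w) [:[:w,u:], [:v:]:] = [:0,1:]"
  unfolding Y_of_F_def by (simp add: pcompose_pCons)

lemma pcompose_power_left: "pcompose ((p::'b::comm_ring_1 poly) ^ n) q = (pcompose p q) ^ n"
  by (induction n) (simp_all add: pcompose_1 pcompose_mult)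

lemma pcompose_pX: "pcompose [:0,1:] (q::'b::comm_ring_1 poly) = q"
  by (simp add: pcompose_pCons)

lemma linear_form_power_dvd_iff:
  fixes P :: "'a::field_char_0 poly poly"
  assumes v: "v \<noteq> 0"
  shows "[:[:w,u:], [:v:]:] ^ m dvd P \<longleftrightarrow> (\<forall>k<m. coeff (pcompose P (Y_of_F u v w)) k = 0)"
proof -
  let ?F = "[:[:w,u:], [:v:]:]" and ?s = "Y_of_F u v w"
  have "?F ^ m dvd P \<longleftrightarrow> [:0,1:] ^ m dvd pcompose P ?s"
  proof
    assume "?F ^ m dvd P"
    then obtain Q where "P = ?F ^ m * Q" by (auto elim: dvdE)
    then have "pcompose P ?s = [:0,1:] ^ m * pcompose Q ?s"
      by (simp add: pcompose_mult pcompose_power_left pcompose_linear_form_Y_of_F[OF v])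
    then show "[:0,1:] ^ m dvd pcompose P ?s" by simp
  next
    assume "[:0,1:] ^ m dvd pcompose P ?s"
    then obtain G where G: "pcompose P ?s = [:0,1:] ^ m * G" by (auto elim: dvdE)
    have "P = pcompose P (pcompose ?s ?F)" by (simp add: pcompose_Y_of_F_linear_form[OF v])
    also have "\<dots> = ?F ^ m * pcompose G ?F"
      unfolding pcompose_assoc G by (simp add: pcompose_mult pcompose_power_left pcompose_pX)
    finally show "?F ^ m dvd P" by simp
  qed
  then show ?thesis using monom_1_dvd_iff'[of m] by (simp add: monom_altdef)
qed

lemma pcompose_Y_of_F_eq_0_iff:
  fixes P :: "'a::field_char_0 poly poly"
  assumes v: "v \<noteq> 0"
  shows "pcompose P (Y_of_F u v w) = 0 \<longleftrightarrow> P = 0"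
proof
  assume zero: "pcompose P (Y_of_F u v w) = 0"
  have "P = pcompose P (pcompose (Y_of_F u v w) [:[:w,u:], [:v:]:])"
    by (simp add: pcompose_Y_of_F_linear_form[OF v])
  also have "\<dots> = 0" unfolding pcompose_assoc zero by simp
  finally show "P = 0" .
qed simp

definition first_nonzero :: "(nat \<Rightarrow> 'a::zero) \<Rightarrow> enat" where
  "first_nonzero f = (if \<forall>k. f k = 0 then \<infinity> else enat (LEAST k. f k \<noteq> 0))"

lemma mult_F_eq_first_nonzero:
  fixes P :: "'a::field_char_0 poly poly"
  assumes v: "v \<noteq> 0"
  shows "mult_F [:[:w,u:], [:v:]:] P = first_nonzero (coeff (pcompose P (Y_of_F u v w)))"
proof (cases "P = 0")
  case True
  then show ?thesis by (simp add: mult_F_def first_nonzero_def)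
next
  case False
  let ?L = "coeff (pcompose P (Y_of_F u v w))"
  have ex: "\<exists>k. ?L k \<noteq> 0"
    using False pcompose_Y_of_F_eq_0_iff[OF v] by (metis coeff_0 poly_eqI)
  define m where "m = (LEAST k. ?L k \<noteq> 0)"
  have "(GREATEST mu. [:[:w,u:], [:v:]:] ^ mu dvd P) = m"
  proof (rule Greatest_equality)
    show "[:[:w,u:], [:v:]:] ^ m dvd P"
      unfolding linear_form_power_dvd_iff[OF v] m_def using not_less_Least by blast
    fix y assume "[:[:w,u:], [:v:]:] ^ y dvd P"
    then show "y \<le> m"
      unfolding linear_form_power_dvd_iff[OF v] m_def using LeastI_ex[OF ex] not_le by blast
  qed
  then show ?thesis using False ex unfolding mult_F_def first_nonzero_def m_def by auto
qed

lemma coeff_pcompose_bimonom: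
  fixes a u v w r :: "'a::field_char_0"
  assumes r: "u * r = - w" and v: "v \<noteq> 0"
  shows "coeff (pcompose (bimonom a al be) (Y_of_F u v w)) k =
    Polynomial.smult (a * of_nat (be choose k) * (1/v)^k * (-u/v)^(be-k))
      ([:0,1:] ^ al * [:-r,1:] ^ (be-k))"
proof -
  have root: "[:-w/v, -u/v:] = Polynomial.smult (-u/v) [:-r,1:]" using r v
    by (simp add: field_simps)
  have "bimonom a al be = Polynomial.smult (monom a al) ([:0,1:] ^ be)"
    unfolding bimonom_def by (simp add: monom_altdef)
  then have "coeff (pcompose (bimonom a al be) (Y_of_F u v w)) k =
             monom a al * coeff ((Y_of_F u v w) ^ be) k"
    by (simp add: pcompose_smult pcompose_power_left pcompose_pX)
  also have "coeff ((Y_of_F u v w) ^ be) k = of_nat (be choose k) * [:1/v:] ^ k * [:-w/v, -u/v:] ^ (be-k)"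
  proof (cases "k \<le> be")
    case True
    then show ?thesis unfolding Y_of_F_def by (rule coeff_linear_poly_power)
  next
    case False
    have "degree ((Y_of_F u v w) ^ be) \<le> be"
      using degree_power_le[of "Y_of_F u v w" be] v by (simp add: Y_of_F_def)
    then show ?thesis using False by (simp add: coeff_eq_0)
  qed
  also have "monom a al * (of_nat (be choose k) * [:1/v:] ^ k * [:-w/v, -u/v:] ^ (be-k)) =
     Polynomial.smult a ([:0,1:] ^ al) * ([:of_nat (be choose k):] * [:(1/v) ^ k:] *
        Polynomial.smult ((-u/v) ^ (be-k)) ([:-r,1:] ^ (be-k)))"
    unfolding root smult_power by (simp add: monom_altdef poly_const_pow of_nat_poly)
  also have "\<dots> = Polynomial.smult (a * of_nat (be choose k) * (1/v) ^ k * (-u/v) ^ (be-k))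
      ([:0,1:] ^ al * [:-r,1:] ^ (be-k))"
    by (simp add: mult_ac)
  finally show ?thesis .
qed

lemma coeff_pcompose_bimonom_sum:
  fixes a :: "nat \<Rightarrow> 'a::field_char_0" and u v w r :: 'a
  assumes "u * r = - w" and "v \<noteq> 0"
  shows "coeff (pcompose (\<Sum>j\<in>S. bimonom (a j) (alpha j) (beta j)) (Y_of_F u v w)) m =
    (\<Sum>j\<in>S. Polynomial.smult (a j * of_nat (beta j choose m) * (1/v) ^ m * (-u/v) ^ (beta j - m))
      ([:0,1:] ^ (alpha j) * [:-r,1:] ^ (beta j - m)))"
  unfolding pcompose_sum coeff_sum by (simp add: coeff_pcompose_bimonom[OF assms])

section \<open>The gap argument\<close>

lemma choose_two_superadditive: "(a choose 2) + (b choose 2) \<le> ((a + b) choose 2)"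
  unfolding choose_two_eq_sum by (induction b) auto

lemma first_nonzero_min:
  assumes "\<And>m. f m \<noteq> 0 \<longleftrightarrow> g m \<noteq> 0 \<or> h m \<noteq> 0"
  shows "first_nonzero f = min (first_nonzero g) (first_nonzero h)"
proof (cases "\<exists>m. g m \<noteq> 0"; cases "\<exists>m. h m \<noteq> 0")
  assume g: "\<exists>m. g m \<noteq> 0" and h: "\<exists>m. h m \<noteq> 0"
  then have f: "\<exists>m. f m \<noteq> 0" using assms by blast
  have "(LEAST m. f m \<noteq> 0) \<le> (LEAST m. g m \<noteq> 0)" "(LEAST m. f m \<noteq> 0) \<le> (LEAST m. h m \<noteq> 0)"
    using assms LeastI_ex[OF g] LeastI_ex[OF h] by (auto intro: Least_le)
  moreover have "(LEAST m. g m \<noteq> 0) \<le> (LEAST m. f m \<noteq> 0) \<or> (LEAST m. h m \<noteq> 0) \<le> (LEAST m. f m \<noteq> 0)"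
    using assms LeastI_ex[OF f] by (auto intro: Least_le)
  ultimately show ?thesis using f g h unfolding first_nonzero_def by (auto simp: min_def)
qed (use assms in \<open>auto simp: first_nonzero_def\<close>)

lemma exponents_below_gap:
  fixes alpha :: "nat \<Rightarrow> nat"
  assumes l_least: "\<And>i. 1 \<le> i \<Longrightarrow> i < l \<Longrightarrow> \<not> (alpha (i + 1) > alpha 1 + (i choose 2))"
    and j: "1 \<le> j" "j \<le> l"
  shows "alpha j \<le> alpha 1 + ((j - 1) choose 2)"
proof (cases "j = 1")
  case False
  then have "\<not> (alpha (j - 1 + 1) > alpha 1 + ((j - 1) choose 2))"
    using j by (intro l_least) auto
  then show ?thesis using False j by simp
qed simp

text \<open>A combination of the \<open>X^(\<alpha> j) (X - r)^(b j)\<close> over \<open>j \<le> l\<close> has order at \<open>0\<close>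
  at most \<open>\<alpha>\<^sub>j + ((l - j + 1) choose 2) \<le> \<alpha>\<^sub>1 + (l choose 2) < \<alpha>\<^sub>l\<^sub>+\<^sub>1\<close> unless it vanishes, while the
  combination over \<open>j > l\<close> is divisible by \<open>X^\<alpha>\<^sub>l\<^sub>+\<^sub>1\<close>; so they can only cancel if both vanish.\<close>
lemma gap_combination_vanishes:
  fixes alpha b :: "nat \<Rightarrow> nat" and r :: "'a::field_char_0" and e :: "nat \<Rightarrow> 'a"
  assumes r: "r \<noteq> 0"
    and below: "\<And>j. 1 \<le> j \<Longrightarrow> j \<le> l \<Longrightarrow> alpha j \<le> alpha 1 + ((j - 1) choose 2)"
    and above: "\<And>j. l + 1 \<le> j \<Longrightarrow> j \<le> k \<Longrightarrow> alpha (l + 1) \<le> alpha j"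
    and gap: "alpha (l + 1) > alpha 1 + (l choose 2)"
    and cancel: "(\<Sum>j=1..l. Polynomial.smult (e j) ([:0,1:] ^ (alpha j) * [:-r,1:] ^ (b j))) +
                 (\<Sum>j=l+1..k. Polynomial.smult (e j) ([:0,1:] ^ (alpha j) * [:-r,1:] ^ (b j))) = 0"
  shows "(\<Sum>j=1..l. Polynomial.smult (e j) ([:0,1:] ^ (alpha j) * [:-r,1:] ^ (b j))) = 0"
proof (rule ccontr)
  let ?low = "\<Sum>j=1..l. Polynomial.smult (e j) ([:0,1:] ^ (alpha j) * [:-r,1:] ^ (b j))"
  let ?high = "\<Sum>j=l+1..k. Polynomial.smult (e j) ([:0,1:] ^ (alpha j) * [:-r,1:] ^ (b j))"
  assume nz: "?low \<noteq> 0"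
  obtain j where j: "j \<in> {1..l}" and ord: "order 0 ?low \<le> alpha j + (card {t\<in>{1..l}. j \<le> t} choose 2)"
    using order_0_sum_bound[OF r finite_atLeastAtMost nz] by blast
  have "{t\<in>{1..l}. j \<le> t} = {j..l}" using j by auto
  then have "card {t\<in>{1..l}. j \<le> t} = (l - (j - 1))" using j by simp
  moreover have "((j - 1) choose 2) + ((l - (j - 1)) choose 2) \<le> l choose 2"
    using choose_two_superadditive[of "j - 1" "l - (j - 1)"] j by simp
  ultimately have "order 0 ?low < alpha (l + 1)"
    using ord below[of j] j gap by auto
  moreover have "[:0,1:] ^ alpha (l + 1) dvd ?high"
    using above by (intro dvd_sum dvd_smult dvd_mult2 le_imp_power_dvd) auto
  then have "[:-0,1:] ^ alpha (l + 1) dvd ?low"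
    using cancel by (simp add: eq_neg_iff_add_eq_0[symmetric])
  then have "alpha (l + 1) \<le> order 0 ?low" using nz order_divides by blast
  ultimately show False by simp
qed

theorem theorem3p1:
  fixes a :: "nat \<Rightarrow> 'a::field_char_0"
    and alpha beta :: "nat \<Rightarrow> nat"
    and k l :: nat
    and u v w :: 'a
  assumes mono: "\<And>i j. 1 \<le> i \<Longrightarrow> i \<le> j \<Longrightarrow> j \<le> k \<Longrightarrow> alpha i \<le> alpha j"
    and l_range: "1 \<le> l" "l < k"
    and l_prop: "alpha (l + 1) > alpha 1 + (l choose 2)"
    and l_least: "\<And>i. 1 \<le> i \<Longrightarrow> i < l \<Longrightarrow> \<not> (alpha (i + 1) > alpha 1 + (i choose 2))"
    and uvw: "u * v * w \<noteq> 0"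
  shows "mult_F ([:[:u:]:] * varX + [:[:v:]:] * varY + [:[:w:]:])
            ((\<Sum>j=1..l. bimonom (a j) (alpha j) (beta j)) + (\<Sum>j=l+1..k. bimonom (a j) (alpha j) (beta j)))
         = min (mult_F ([:[:u:]:] * varX + [:[:v:]:] * varY + [:[:w:]:]) (\<Sum>j=1..l. bimonom (a j) (alpha j) (beta j)))
               (mult_F ([:[:u:]:] * varX + [:[:v:]:] * varY + [:[:w:]:]) (\<Sum>j=l+1..k. bimonom (a j) (alpha j) (beta j)))"
proof -
  have u: "u \<noteq> 0" and v: "v \<noteq> 0" and "w \<noteq> 0" using uvw by auto
  define r where "r = - w / u"
  have root: "u * r = - w" and "r \<noteq> 0" using u \<open>w \<noteq> 0\<close> unfolding r_def by auto
  define L where "L m P = coeff (pcompose P (Y_of_F u v w)) m" for m P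
  define Q where "Q = (\<Sum>j=1..l. bimonom (a j) (alpha j) (beta j))"
  define R where "R = (\<Sum>j=l+1..k. bimonom (a j) (alpha j) (beta j))"
  have L_add: "L m (Q + R) = L m Q + L m R" for m unfolding L_def by (simp add: pcompose_add)
  have low_vanishes: "L m Q = 0" if "L m Q + L m R = 0" for m
    unfolding Q_def L_def coeff_pcompose_bimonom_sum[OF root v]
  proof (rule gap_combination_vanishes[OF \<open>r \<noteq> 0\<close>])
    show "alpha j \<le> alpha 1 + ((j - 1) choose 2)" if "1 \<le> j" "j \<le> l" for j
      using l_least that by (rule exponents_below_gap)
    show "alpha (l + 1) \<le> alpha j" if "l + 1 \<le> j" "j \<le> k" for j
      using l_range that by (intro mono) auto
  qed (use l_prop that in \<open>simp_all add: Q_def R_def L_def coeff_pcompose_bimonom_sum[OF root v]\<close>)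
  have "L m (Q + R) \<noteq> 0 \<longleftrightarrow> L m Q \<noteq> 0 \<or> L m R \<noteq> 0" for m
    by (metis L_add add_0 low_vanishes)
  then show ?thesis
    unfolding linear_form_eq mult_F_eq_first_nonzero[OF v] Q_def[symmetric] R_def[symmetric]
    by (intro first_nonzero_min) (simp add: L_def)
qed

end
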